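(* Let $G$ be a group, $A$ an alphabet for $G$, and $L\subset A^*$ a regular language such that $\bar L=G$ and the evaluation map $L\to G$ is finite-to-one. Then for each $g\in G$ there are only finitely many words $y\in A^*$ such that $xyz\in L$ for some $x,z\in A^*$ and $\bar y=g$.
   Context: An alphabet for $G$ is a finite set $A$ with a map $a\mapsto\bar a\in G$ whose image generates $G$ as a monoid; $w\mapsto\bar w$ denotes the induced monoid homomorphism $A^*\to G$. *)

theory Defs
  imports "HOL-Algebra.Group"
begin

definition word_eval :: "('b, 'c) monoid_scheme \<Rightarrow> ('a \<Rightarrow> 'b) \<Rightarrow> 'a list \<Rightarrow> 'b" where
  "word_eval G ev w = foldr (\<lambda>a x. ev a \<otimes>\<^bsub>G\<^esub> x) w \<one>\<^bsub>G\<^esub>"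

definition is_alphabet :: "('b, 'c) monoid_scheme \<Rightarrow> 'a set \<Rightarrow> ('a \<Rightarrow> 'b) \<Rightarrow> bool" where
  "is_alphabet G A ev \<longleftrightarrow> finite A \<and> ev ` A \<subseteq> carrier G \<and>
     carrier G \<subseteq> word_eval G ev ` lists A"

definition regular_lang :: "'a set \<Rightarrow> 'a list set \<Rightarrow> bool" where
  "regular_lang A L \<longleftrightarrow> (\<exists>(Q::nat set) q0 (\<delta>::nat \<Rightarrow> 'a \<Rightarrow> nat) F.
      finite Q \<and> q0 \<in> Q \<and> (\<forall>q\<in>Q. \<forall>a\<in>A. \<delta> q a \<in> Q) \<and> F \<subseteq> Q \<and>
      L = {w \<in> lists A. foldl \<delta> q0 w \<in> F})"

end

theory Submission
  imports Defs
begin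

text \<open>Fix, for every pair of DFA states \<open>(p, r)\<close> that occurs, a word \<open>x\<^sub>p\<close> leading
  from the initial state to \<open>p\<close> and a word \<open>z\<^sub>r\<close> leading from \<open>r\<close> to acceptance.
  If \<open>x y z \<in> L\<close>, with \<open>p\<close> the state after \<open>x\<close> and \<open>r\<close> the state after \<open>x y\<close>, then also
  \<open>x\<^sub>p y z\<^sub>r \<in> L\<close>. So every infix \<open>y\<close> of \<open>L\<close> with \<open>\<bar>y\<bar> = g\<close> sits in one of finitely
  many contexts \<open>(x\<^sub>p, z\<^sub>r)\<close>, and within a fixed context \<open>y\<close> is determined by the word
  \<open>x\<^sub>p y z\<^sub>r \<in> L\<close>, whose value \<open>\<bar>x\<^sub>p\<bar> g \<bar>z\<^sub>r\<bar>\<close> has only finitely many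
  representatives in \<open>L\<close>.\<close>

lemma word_eval_closed:
  assumes "monoid G" "ev ` A \<subseteq> carrier G" "w \<in> lists A"
  shows "word_eval G ev w \<in> carrier G"
  using assms(3) by (induction w) (use assms in \<open>auto simp: word_eval_def monoid.m_closed\<close>)

lemma word_eval_append:
  assumes "monoid G" "ev ` A \<subseteq> carrier G" "u \<in> lists A" "v \<in> lists A"
  shows "word_eval G ev (u @ v) = word_eval G ev u \<otimes>\<^bsub>G\<^esub> word_eval G ev v"
  using assms(3)
proof (induction u)
  case Nil
  then show ?case
    using word_eval_closed[OF assms(1,2,4)] by (simp add: word_eval_def monoid.l_one[OF assms(1)])
next
  case (Cons a u)
  then have "ev a \<in> carrier G" "word_eval G ev u \<in> carrier G"
    using assms(2) word_eval_closed[OF assms(1,2)] by auto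
  with Cons show ?case
    using monoid.m_assoc[OF assms(1)] word_eval_closed[OF assms(1,2,4)]
    by (simp add: word_eval_def)
qed

lemma foldl_in_states:
  assumes "\<forall>q\<in>Q. \<forall>a\<in>A. \<delta> q a \<in> Q" "q \<in> Q" "w \<in> lists A"
  shows "foldl \<delta> q w \<in> Q"
  using assms(2,3) by (induction w arbitrary: q) (use assms(1) in auto)

lemma regular_lang_finite_contexts:
  assumes "regular_lang A L"
  obtains C where "finite C" "C \<subseteq> lists A \<times> lists A"
    and "\<And>x y z. x \<in> lists A \<Longrightarrow> y \<in> lists A \<Longrightarrow> z \<in> lists A \<Longrightarrow> x @ y @ z \<in> L \<Longrightarrow>
           \<exists>(x', z')\<in>C. x' @ y @ z' \<in> L"
proof -
  obtain Q q0 \<delta> F where "finite (Q :: nat set)" "q0 \<in> Q"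
    and \<delta>: "\<forall>q\<in>Q. \<forall>a\<in>A. \<delta> q a \<in> Q" and "F \<subseteq> Q"
    and L: "L = {w \<in> lists A. foldl \<delta> q0 w \<in> F}"
    using assms unfolding regular_lang_def by blast
  define P where "P = foldl \<delta> q0 ` lists A"
  define R where "R = {r \<in> Q. \<exists>z\<in>lists A. foldl \<delta> r z \<in> F}"
  have "P \<subseteq> Q"
    unfolding P_def using foldl_in_states[OF \<delta> \<open>q0 \<in> Q\<close>] by blast
  then have fin: "finite (P \<times> R)"
    using \<open>finite Q\<close> by (auto simp: R_def intro: finite_subset)
  obtain X where X: "\<forall>p\<in>P. X p \<in> lists A \<and> foldl \<delta> q0 (X p) = p"
    using bchoice[of P "\<lambda>p x. x \<in> lists A \<and> foldl \<delta> q0 x = p"] unfolding P_def by blast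
  obtain Z where Z: "\<forall>r\<in>R. Z r \<in> lists A \<and> foldl \<delta> r (Z r) \<in> F"
    using bchoice[of R "\<lambda>r z. z \<in> lists A \<and> foldl \<delta> r z \<in> F"] unfolding R_def by blast
  show thesis
  proof
    show "finite ((\<lambda>(p, r). (X p, Z r)) ` (P \<times> R))"
      using fin by (rule finite_imageI)
    show "(\<lambda>(p, r). (X p, Z r)) ` (P \<times> R) \<subseteq> lists A \<times> lists A"
      using X Z by auto
  next
    fix x y z assume "x \<in> lists A" "y \<in> lists A" "z \<in> lists A" "x @ y @ z \<in> L"
    define p where "p = foldl \<delta> q0 x"
    define r where "r = foldl \<delta> p y"
    have "p \<in> P"
      using \<open>x \<in> lists A\<close> by (simp add: P_def p_def)
    moreover have "r \<in> R"
      using \<open>P \<subseteq> Q\<close> \<open>p \<in> P\<close> \<open>y \<in> lists A\<close> \<open>z \<in> lists A\<close> \<open>x @ y @ z \<in> L\<close>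
        foldl_in_states[OF \<delta>] by (auto simp: R_def L p_def r_def)
    moreover have "X p @ y @ Z r \<in> L"
      using X Z \<open>p \<in> P\<close> \<open>r \<in> R\<close> \<open>y \<in> lists A\<close> by (simp add: L r_def)
    ultimately show "\<exists>(x', z')\<in>(\<lambda>(p, r). (X p, Z r)) ` (P \<times> R). x' @ y @ z' \<in> L"
      by force
  qed
qed

lemma finite_infixes_in_contexts_with_value:
  assumes G: "monoid G" "ev ` A \<subseteq> carrier G"
    and fibres: "\<forall>g\<in>carrier G. finite {w \<in> L. word_eval G ev w = g}"
    and C: "finite C" "C \<subseteq> lists A \<times> lists A"
    and "g \<in> carrier G"
  shows "finite {y \<in> lists A. (\<exists>(x, z)\<in>C. x @ y @ z \<in> L) \<and> word_eval G ev y = g}"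
proof -
  define T where "T x z = (\<lambda>y. x @ y @ z) -`
    {w \<in> L. word_eval G ev w = word_eval G ev x \<otimes>\<^bsub>G\<^esub> g \<otimes>\<^bsub>G\<^esub> word_eval G ev z}" for x z
  have T_finite: "finite (T x z)" if "(x, z) \<in> C" for x z
  proof -
    have "x \<in> lists A" "z \<in> lists A"
      using that C(2) by auto
    then have "finite {w \<in> L. word_eval G ev w = word_eval G ev x \<otimes>\<^bsub>G\<^esub> g \<otimes>\<^bsub>G\<^esub> word_eval G ev z}"
      using fibres \<open>g \<in> carrier G\<close> word_eval_closed[OF G] by (simp add: monoid.m_closed[OF G(1)])
    moreover have "inj (\<lambda>y. x @ y @ z)"
      by (simp add: inj_def)
    ultimately show ?thesis
      unfolding T_def by (rule finite_vimageI)
  qed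
  have "finite (\<Union>(x, z)\<in>C. T x z)"
    using C(1) T_finite by (auto intro!: finite_UN_I)
  moreover have "{y \<in> lists A. (\<exists>(x, z)\<in>C. x @ y @ z \<in> L) \<and> word_eval G ev y = g}
      \<subseteq> (\<Union>(x, z)\<in>C. T x z)"
  proof
    fix y assume "y \<in> {y \<in> lists A. (\<exists>(x, z)\<in>C. x @ y @ z \<in> L) \<and> word_eval G ev y = g}"
    then obtain x z where "y \<in> lists A" "(x, z) \<in> C" "x @ y @ z \<in> L" "word_eval G ev y = g"
      by blast
    moreover from this have "x \<in> lists A" "z \<in> lists A"
      using C(2) by auto
    ultimately have "y \<in> T x z"
      using word_eval_closed[OF G] \<open>g \<in> carrier G\<close>
      by (simp add: T_def word_eval_append[OF G] monoid.m_assoc[OF G(1)])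
    then show "y \<in> (\<Union>(x, z)\<in>C. T x z)"
      using \<open>(x, z) \<in> C\<close> by blast
  qed
  ultimately show ?thesis
    by (rule finite_subset[rotated])
qed

theorem lemma3p4:
  fixes G :: "('b, 'c) monoid_scheme" and A :: "'a set" and ev :: "'a \<Rightarrow> 'b"
    and L :: "'a list set"
  assumes "group G"
    and "is_alphabet G A ev"
    and "regular_lang A L"
    and "word_eval G ev ` L = carrier G"
    and "\<forall>g\<in>carrier G. finite {w \<in> L. word_eval G ev w = g}"
  shows "\<forall>g\<in>carrier G. finite {y \<in> lists A. (\<exists>x z. x \<in> lists A \<and> z \<in> lists A \<and> x @ y @ z \<in> L)
            \<and> word_eval G ev y = g}"
proof
  fix g assume "g \<in> carrier G"
  have G: "monoid G" "ev ` A \<subseteq> carrier G"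
    using assms(1,2) by (simp_all add: group.is_monoid is_alphabet_def)
  obtain C where C: "finite C" "C \<subseteq> lists A \<times> lists A"
    and contexts: "\<And>x y z. x \<in> lists A \<Longrightarrow> y \<in> lists A \<Longrightarrow> z \<in> lists A \<Longrightarrow> x @ y @ z \<in> L \<Longrightarrow>
           \<exists>(x', z')\<in>C. x' @ y @ z' \<in> L"
    by (rule regular_lang_finite_contexts[OF assms(3)], rule that)
  have "{y \<in> lists A. (\<exists>x z. x \<in> lists A \<and> z \<in> lists A \<and> x @ y @ z \<in> L) \<and> word_eval G ev y = g}
      \<subseteq> {y \<in> lists A. (\<exists>(x, z)\<in>C. x @ y @ z \<in> L) \<and> word_eval G ev y = g}"
    using contexts by blast
  moreover have "finite {y \<in> lists A. (\<exists>(x, z)\<in>C. x @ y @ z \<in> L) \<and> word_eval G ev y = g}"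
    using finite_infixes_in_contexts_with_value[OF G assms(5) C \<open>g \<in> carrier G\<close>] .
  ultimately show "finite {y \<in> lists A. (\<exists>x z. x \<in> lists A \<and> z \<in> lists A \<and> x @ y @ z \<in> L)
            \<and> word_eval G ev y = g}"
    by (rule finite_subset)
qed

end
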